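(* Let the data vector $S\in\mathbb{R}^d$ have Gaussian density \[ f(s\mid\beta^* )=(2\pi)^{-d/2}|\Sigma_f|^{-1/2}\exp\!\big(-(s-\mu(\beta^* ))^T\Sigma_f^{-1}(s-\mu(\beta^* ))/2\big), \] with differentiable mean map $\mu:\mathbb{R}^k\to\mathbb{R}^d$ and positive definite $\Sigma_f$, and let $\pi$ be a differentiable prior density on $\beta^*\in\mathbb{R}^k$. Let $D\in\mathbb{R}^{p\times d}$, $P\in\mathbb{R}^{p\times p}$, $q\in\mathbb{R}^p$, let $\Lambda_g^*$ be the convex conjugate of the log-MGF of the randomization, and let $b_{\mathcal{R}_O}$ be a barrier function on the constraint set $\mathcal{R}_O\subset\mathbb{R}^p$. Define the approximate log-normalizer \[ \log\hat{\mathbb{P}}(\beta^* )=-\inf_{s\in\mathbb{R}^d,\,o\in\mathbb{R}^p}\Big\{\tfrac12(s-\mu(\beta^* ))^T\Sigma_f^{-1}(s-\mu(\beta^* ))+\Lambda_g^*(Ds+Po+q)+b_{\mathcal{R}_O}(o)\Big\} \] and the pseudo selective posterior $\tilde\pi_E(\beta^*\mid s)\propto\pi(\beta^* )f(s\mid\beta^* )/\hat{\mathbb{P}}(\beta^* )$. Then the gradient of $\log\tilde\pi_E(\cdot\mid s)$ at $\beta^{*(K)}$ is \[ \frac{\partial\log\pi(\beta^* )}{\partial\beta^*}\Big|_{\beta^{*(K)}}+\Big(\frac{\partial\mu}{\partial\beta^*}\Big)^T\Big|_{\beta^{*(K)}}\Sigma_f^{-1}\Big\{s-s^*\big(\Sigma_f^{-1}\mu(\beta^{*(K)})\big)\Big\},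 \] where \[ s^*\big(\Sigma_f^{-1}\mu(\beta^* )\big)=\arg\max_{z\in\mathbb{R}^d}\Big(z^T\Sigma_f^{-1}\mu(\beta^* )-\tfrac12 z^T\Sigma_f^{-1}z-\inf_{o\in\mathbb{R}^p}\big\{\Lambda_g^*(Dz+Po+q)+b_{\mathcal{R}_O}(o)\big\}\Big). \]
   Context: The log-MGF of the randomization $\Omega\in\mathbb{R}^p$ is $\Lambda_g(t)=\log\mathbb{E}[\exp(t^T\Omega)]$ and its convex conjugate is $\Lambda_g^*(w)=\sup_t\{t^Tw-\Lambda_g(t)\}$. A barrier function $b_{\mathcal{R}_O}$ is a convex penalty finite on the interior of $\mathcal{R}_O$ and increasing continuously towards its boundary. $\partial\mu/\partial\beta^*$ denotes the $d\times k$ Jacobian of $\mu$. *)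

theory Defs
  imports "HOL-Analysis.Analysis" "HOL-Probability.Probability"
begin

definition pos_def_mat :: "real^'n^'n \<Rightarrow> bool" where
  "pos_def_mat A \<longleftrightarrow> transpose A = A \<and> (\<forall>x. x \<noteq> 0 \<longrightarrow> x \<bullet> (A *v x) > 0)"

definition gauss_dens :: "real^'d^'d \<Rightarrow> real^'d \<Rightarrow> real^'d \<Rightarrow> real" where
  "gauss_dens Sig m s =
     (2 * pi) powr (- real CARD('d) / 2) * (det Sig) powr (-1/2) *
     exp (- ((s - m) \<bullet> (matrix_inv Sig *v (s - m))) / 2)"

definition log_mgf :: "(real^'p) measure \<Rightarrow> real^'p \<Rightarrow> ereal" where
  "log_mgf G t =
     (let m = (\<integral>\<^sup>+ w. ennreal (exp (t \<bullet> w)) \<partial>G)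
      in if m = \<infinity> then \<infinity> else ereal (ln (enn2real m)))"

definition conj_fun :: "('a::real_inner \<Rightarrow> ereal) \<Rightarrow> 'a \<Rightarrow> ereal" where
  "conj_fun L w = (SUP t. ereal (t \<bullet> w) - L t)"

definition barrier :: "('p::euclidean_space) set \<Rightarrow> ('p \<Rightarrow> real) \<Rightarrow> bool" where
  "barrier R b \<longleftrightarrow> convex_on (interior R) b \<and> continuous_on (interior R) b \<and>
     (\<forall>x\<in>frontier R. filterlim b at_top (at x within interior R))"

definition barrier_ext :: "('p::euclidean_space) set \<Rightarrow> ('p \<Rightarrow> real) \<Rightarrow> 'p \<Rightarrow> ereal" where
  "barrier_ext R b u = (if u \<in> interior R then ereal (b u) else \<infinity>)"

definition log_Phat ::
  "(real^'k \<Rightarrow> real^'d) \<Rightarrow> real^'d^'d \<Rightarrow> real^'d^'p \<Rightarrow> real^'p^'p \<Rightarrow> real^'p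
   \<Rightarrow> (real^'p) measure \<Rightarrow> (real^'p) set \<Rightarrow> (real^'p \<Rightarrow> real) \<Rightarrow> real^'k \<Rightarrow> ereal" where
  "log_Phat mu Sig D P q G R b beta =
     - (INF s. INF u. ereal ((s - mu beta) \<bullet> (matrix_inv Sig *v (s - mu beta)) / 2)
          + conj_fun (log_mgf G) (D *v s + P *v u + q) + barrier_ext R b u)"

definition sstar_obj ::
  "real^'d^'d \<Rightarrow> real^'d^'p \<Rightarrow> real^'p^'p \<Rightarrow> real^'p
   \<Rightarrow> (real^'p) measure \<Rightarrow> (real^'p) set \<Rightarrow> (real^'p \<Rightarrow> real) \<Rightarrow> real^'d \<Rightarrow> real^'d \<Rightarrow> ereal" where
  "sstar_obj Sig D P q G R b eta z =
     ereal (z \<bullet> eta - z \<bullet> (matrix_inv Sig *v z) / 2)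
     - (INF u. conj_fun (log_mgf G) (D *v z + P *v u + q) + barrier_ext R b u)"

definition s_star ::
  "real^'d^'d \<Rightarrow> real^'d^'p \<Rightarrow> real^'p^'p \<Rightarrow> real^'p
   \<Rightarrow> (real^'p) measure \<Rightarrow> (real^'p) set \<Rightarrow> (real^'p \<Rightarrow> real) \<Rightarrow> real^'d \<Rightarrow> real^'d" where
  "s_star Sig D P q G R b eta = arg_max (sstar_obj Sig D P q G R b eta) (\<lambda>_. True)"

definition grad :: "(real^'k \<Rightarrow> real) \<Rightarrow> real^'k \<Rightarrow> real^'k" where
  "grad f x = (\<chi> i. frechet_derivative f (at x) (axis i 1))"

end

theory Submission
  imports Defs
begin

text \<open>
  Writing \<open>A = \<Sigma>\<^sub>f\<^sup>-\<^sup>1\<close> and \<open>Q(v) = v\<^sup>T A v\<close>, the approximate log-normaliser is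
  \<open>-V(\<mu>(\<beta>))\<close>, where \<open>V(m) = inf\<^sub>y Q(y - m)/2 + H(y)\<close> is the Moreau envelope of the convex
  function \<open>H(z) = inf\<^sub>o \<Lambda>\<^sub>g\<^sup>*(Dz + Po + q) + b(o)\<close>. Completing the square shows that
  \<open>s\<^sup>*(A\<mu>(\<beta>))\<close> is exactly the minimiser \<open>z\<^sub>0\<close> of the envelope at \<open>m\<^sub>0 = \<mu>(\<beta>)\<close>. Optimality of
  \<open>z\<^sub>0\<close> together with convexity of \<open>H\<close> makes \<open>A(m\<^sub>0 - z\<^sub>0)\<close> a subgradient of \<open>H\<close> at \<open>z\<^sub>0\<close>,
  which squeezes \<open>V\<close> between an affine function and the same function plus \<open>Q(m - m\<^sub>0)/2\<close>.
  Hence \<open>V\<close> is differentiable at \<open>m\<^sub>0\<close> with gradient \<open>A(m\<^sub>0 - z\<^sub>0)\<close>, and the chain rule gives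
  the gradient of the log pseudo posterior.
\<close>

subsection \<open>Positive definite matrices and their quadratic forms\<close>

definition quad_form :: "real^'n^'n \<Rightarrow> real^'n \<Rightarrow> real" where
  "quad_form A x = x \<bullet> (A *v x)"

lemma symmetric_matrix_inner_commute:
  fixes A :: "real^'n^'n"
  assumes "transpose A = A"
  shows "x \<bullet> (A *v y) = y \<bullet> (A *v x)"
proof -
  have "x \<bullet> (A *v y) = (transpose A *v x) \<bullet> y"
    by (simp add: dot_lmul_matrix)
  then show ?thesis
    using assms by (simp add: inner_commute)
qed

lemma symmetric_matrix_inner_diff_commute:
  fixes A :: "real^'n^'n"
  assumes "transpose A = A"
  shows "(A *v (x - y)) \<bullet> v = - ((y - x) \<bullet> (A *v v))"
  using symmetric_matrix_inner_commute[OF assms, of "y - x" v]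
  by (simp add: inner_commute matrix_vector_mult_diff_distrib inner_diff_left inner_diff_right)

lemma pos_def_mat_invertible:
  fixes A :: "real^'n^'n"
  assumes "pos_def_mat A"
  shows "invertible A"
proof -
  have "\<forall>x. A *v x = 0 \<longrightarrow> x = 0"
    using assms unfolding pos_def_mat_def by (metis inner_zero_right less_irrefl)
  then obtain B where "B ** A = mat 1"
    using matrix_left_invertible_ker by blast
  then show ?thesis
    unfolding invertible_def using matrix_left_right_inverse by blast
qed

lemma invertible_matrix_inv:
  fixes A :: "'a::semiring_1^'n^'m"
  assumes "invertible A"
  shows "A ** matrix_inv A = mat 1" "matrix_inv A ** A = mat 1"
  using someI_ex[OF assms[unfolded invertible_def]] unfolding matrix_inv_def by auto

lemma pos_def_mat_matrix_inv:
  fixes A :: "real^'n^'n"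
  assumes A: "pos_def_mat A"
  shows "pos_def_mat (matrix_inv A)"
proof -
  let ?B = "matrix_inv A"
  have sym: "transpose A = A" and pos: "\<And>x. x \<noteq> 0 \<Longrightarrow> x \<bullet> (A *v x) > 0"
    using A by (auto simp: pos_def_mat_def)
  have AB: "A ** ?B = mat 1" "?B ** A = mat 1"
    using invertible_matrix_inv[OF pos_def_mat_invertible[OF A]] by auto
  have "transpose ?B ** A = mat 1"
    using arg_cong[OF AB(1), of transpose] sym by (simp add: matrix_transpose_mul)
  then have "transpose ?B = ?B"
    by (metis AB(1) matrix_mul_assoc matrix_mul_lid matrix_mul_rid)
  moreover have "x \<bullet> (?B *v x) > 0" if "x \<noteq> 0" for x
  proof -
    have inv: "A *v (?B *v x) = x"
      by (simp add: matrix_vector_mul_assoc AB(1))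
    then have "?B *v x \<noteq> 0"
      using that by auto
    then show ?thesis
      using pos[of "?B *v x"] inv by (simp add: inner_commute)
  qed
  ultimately show ?thesis
    by (simp add: pos_def_mat_def)
qed

lemma pos_def_mat_quad_form_nonneg:
  assumes "pos_def_mat A"
  shows "0 \<le> quad_form A x"
  using assms unfolding pos_def_mat_def quad_form_def
  by (cases "x = 0") (auto intro: less_imp_le)

lemma quad_form_add:
  assumes "transpose A = A"
  shows "quad_form A (x + y) = quad_form A x + 2 * (x \<bullet> (A *v y)) + quad_form A y"
  unfolding quad_form_def using symmetric_matrix_inner_commute[OF assms, of y x]
  by (simp add: matrix_vector_right_distrib inner_add_left inner_add_right)

lemma quad_form_diff:
  assumes "transpose A = A"
  shows "quad_form A (x - y) = quad_form A x - 2 * (x \<bullet> (A *v y)) + quad_form A y"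
  unfolding quad_form_def using symmetric_matrix_inner_commute[OF assms, of y x]
  by (simp add: matrix_vector_mult_diff_distrib inner_diff_left inner_diff_right)

lemma quad_form_scaleR: "quad_form A (t *\<^sub>R x) = t\<^sup>2 * quad_form A x"
  unfolding quad_form_def by (simp add: matrix_vector_mult_scaleR power2_eq_square)

lemma quad_form_le_norm_square: "\<exists>K\<ge>0. \<forall>x. quad_form A x \<le> K * (norm x)\<^sup>2"
proof -
  obtain K where K: "K > 0" "\<And>x. norm (A *v x) \<le> norm x * K"
    using bounded_linear.pos_bounded[OF matrix_vector_mul_bounded_linear[of A]] by blast
  have "quad_form A x \<le> K * (norm x)\<^sup>2" for x
  proof -
    have "quad_form A x \<le> norm x * norm (A *v x)"
      unfolding quad_form_def by (rule norm_cauchy_schwarz)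
    also have "\<dots> \<le> norm x * (norm x * K)"
      by (rule mult_left_mono[OF K(2)]) simp
    finally show ?thesis
      by (simp add: power2_eq_square algebra_simps)
  qed
  then show ?thesis
    using K(1) by (intro exI[of _ K]) auto
qed

lemma has_derivative_quad_form:
  assumes "transpose A = A"
  shows "(quad_form A has_derivative (\<lambda>h. 2 * ((A *v x) \<bullet> h))) (at x)"
proof -
  have "(quad_form A has_derivative (\<lambda>h. x \<bullet> (A *v h) + h \<bullet> (A *v x))) (at x)"
    unfolding quad_form_def
    by (intro has_derivative_inner has_derivative_ident
        bounded_linear_imp_has_derivative matrix_vector_mul_bounded_linear)
  moreover have "x \<bullet> (A *v h) + h \<bullet> (A *v x) = 2 * ((A *v x) \<bullet> h)" for h
    using symmetric_matrix_inner_commute[OF assms, of x h] by (simp add: inner_commute)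
  ultimately show ?thesis
    by simp
qed

subsection \<open>Convexity of extended-real functions\<close>

text \<open>Convexity of the epigraph; unlike \<open>convex_on\<close> this admits the values \<open>\<plusminus>\<infinity>\<close>.\<close>
definition convex_ereal :: "('a::real_vector \<Rightarrow> ereal) \<Rightarrow> bool" where
  "convex_ereal f \<longleftrightarrow> (\<forall>x y a b t. f x \<le> ereal a \<longrightarrow> f y \<le> ereal b \<longrightarrow> 0 \<le> t \<longrightarrow> t \<le> 1 \<longrightarrow>
     f ((1 - t) *\<^sub>R x + t *\<^sub>R y) \<le> ereal ((1 - t) * a + t * b))"

lemma convex_erealI:
  assumes "\<And>x y a b t. f x \<le> ereal a \<Longrightarrow> f y \<le> ereal b \<Longrightarrow> 0 \<le> t \<Longrightarrow> t \<le> 1 \<Longrightarrow>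
             f ((1 - t) *\<^sub>R x + t *\<^sub>R y) \<le> ereal ((1 - t) * a + t * b)"
  shows "convex_ereal f"
  using assms unfolding convex_ereal_def by blast

lemma convex_erealD:
  assumes "convex_ereal f" "f x \<le> ereal a" "f y \<le> ereal b" "0 \<le> t" "t \<le> 1"
  shows "f ((1 - t) *\<^sub>R x + t *\<^sub>R y) \<le> ereal ((1 - t) * a + t * b)"
  using assms unfolding convex_ereal_def by blast

lemma convex_ereal_conj_fun: "convex_ereal (conj_fun L)"
proof (rule convex_erealI)
  fix w0 w1 a b and s :: real
  assume a: "conj_fun L w0 \<le> ereal a" and b: "conj_fun L w1 \<le> ereal b" and s: "0 \<le> s" "s \<le> 1"
  have affine_le: "ereal (t \<bullet> w) - L t \<le> ereal c" if "conj_fun L w \<le> ereal c" for t w c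
    using that unfolding conj_fun_def by (meson SUP_upper UNIV_I order_trans)
  show "conj_fun L ((1 - s) *\<^sub>R w0 + s *\<^sub>R w1) \<le> ereal ((1 - s) * a + s * b)"
    unfolding conj_fun_def
  proof (rule SUP_least)
    fix t
    show "ereal (t \<bullet> ((1 - s) *\<^sub>R w0 + s *\<^sub>R w1)) - L t \<le> ereal ((1 - s) * a + s * b)"
    proof (cases "L t")
      case (real l)
      have "t \<bullet> w0 - l \<le> a" "t \<bullet> w1 - l \<le> b"
        using affine_le[OF a, of t] affine_le[OF b, of t] real by simp_all
      then have "(1 - s) * (t \<bullet> w0 - l) + s * (t \<bullet> w1 - l) \<le> (1 - s) * a + s * b"
        using s by (intro add_mono mult_left_mono) auto
      then show ?thesis
        using real by (simp add: inner_add_right algebra_simps)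
    next
      case MInf
      then show ?thesis
        using affine_le[OF a, of t] by simp
    qed simp
  qed
qed

lemma convex_ereal_barrier_ext:
  assumes "convex_on (interior R) b"
  shows "convex_ereal (barrier_ext R b)"
proof (rule convex_erealI)
  fix x y \<alpha> \<beta> and t :: real
  assume x: "barrier_ext R b x \<le> ereal \<alpha>" and y: "barrier_ext R b y \<le> ereal \<beta>" and t: "0 \<le> t" "t \<le> 1"
  have int: "x \<in> interior R" "y \<in> interior R" and le: "b x \<le> \<alpha>" "b y \<le> \<beta>"
    using x y by (auto simp: barrier_ext_def split: if_splits)
  have "(1 - t) *\<^sub>R x + t *\<^sub>R y \<in> interior R"
    using assms int t by (simp add: convex_on_def convexD)
  moreover have "b ((1 - t) *\<^sub>R x + t *\<^sub>R y) \<le> (1 - t) * b x + t * b y"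
    using convex_onD[OF assms] int t by blast
  moreover have "(1 - t) * b x + t * b y \<le> (1 - t) * \<alpha> + t * \<beta>"
    using le t by (intro add_mono mult_left_mono) auto
  ultimately show "barrier_ext R b ((1 - t) *\<^sub>R x + t *\<^sub>R y) \<le> ereal ((1 - t) * \<alpha> + t * \<beta>)"
    by (simp add: barrier_ext_def)
qed

lemma convex_ereal_add:
  assumes f: "convex_ereal f" and g: "convex_ereal g"
    and "\<And>x. f x \<noteq> -\<infinity>" "\<And>x. g x \<noteq> -\<infinity>"
  shows "convex_ereal (\<lambda>x. f x + g x)"
proof (rule convex_erealI)
  fix x y a b and t :: real
  assume x: "f x + g x \<le> ereal a" and y: "f y + g y \<le> ereal b" and t: "0 \<le> t" "t \<le> 1"
  have split: "\<exists>r. f z \<le> ereal r \<and> g z \<le> ereal (c - r)" if "f z + g z \<le> ereal c" for z c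
    using that assms(3,4)[of z] by (cases "f z"; cases "g z") (auto intro!: exI[of _ "real_of_ereal (f z)"])
  obtain r s where r: "f x \<le> ereal r" "g x \<le> ereal (a - r)" and s: "f y \<le> ereal s" "g y \<le> ereal (b - s)"
    using split[OF x] split[OF y] by blast
  have "f ((1 - t) *\<^sub>R x + t *\<^sub>R y) + g ((1 - t) *\<^sub>R x + t *\<^sub>R y)
      \<le> ereal ((1 - t) * r + t * s) + ereal ((1 - t) * (a - r) + t * (b - s))"
    by (intro add_mono convex_erealD[OF f] convex_erealD[OF g] r s t)
  then show "f ((1 - t) *\<^sub>R x + t *\<^sub>R y) + g ((1 - t) *\<^sub>R x + t *\<^sub>R y) \<le> ereal ((1 - t) * a + t * b)"
    by (simp add: algebra_simps)
qed

lemma convex_ereal_compose_affine: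
  assumes "convex_ereal f" "linear L"
  shows "convex_ereal (\<lambda>x. f (L x + c))"
proof (rule convex_erealI)
  fix x y a b and t :: real
  assume "f (L x + c) \<le> ereal a" "f (L y + c) \<le> ereal b" "0 \<le> t" "t \<le> 1"
  moreover have "L ((1 - t) *\<^sub>R x + t *\<^sub>R y) + c = (1 - t) *\<^sub>R (L x + c) + t *\<^sub>R (L y + c)"
    using assms(2) by (simp only: linear_add linear_scale) (simp add: algebra_simps)
  ultimately show "f (L ((1 - t) *\<^sub>R x + t *\<^sub>R y) + c) \<le> ereal ((1 - t) * a + t * b)"
    using convex_erealD[OF assms(1)] by metis
qed

lemma convex_ereal_INF:
  assumes f: "convex_ereal f"
  shows "convex_ereal (\<lambda>x. INF u. f (x, u))"
proof (rule convex_erealI)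
  fix x y a b and t :: real
  assume x: "(INF u. f (x, u)) \<le> ereal a" and y: "(INF u. f (y, u)) \<le> ereal b" and t: "0 \<le> t" "t \<le> 1"
  show "(INF u. f ((1 - t) *\<^sub>R x + t *\<^sub>R y, u)) \<le> ereal ((1 - t) * a + t * b)"
  proof (rule ereal_le_epsilon2)
    fix e :: real
    assume e: "0 < e"
    have near: "\<exists>u. f (z, u) \<le> ereal (c + e)" if "(INF u. f (z, u)) \<le> ereal c" for z c
    proof -
      have "(INF u. f (z, u)) < ereal (c + e)"
        by (rule le_less_trans[OF that]) (use e in simp)
      then show ?thesis
        by (metis INF_less_iff UNIV_I less_imp_le)
    qed
    obtain u v where u: "f (x, u) \<le> ereal (a + e)" and v: "f (y, v) \<le> ereal (b + e)"
      using near[OF x] near[OF y] by blast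
    have "(INF w. f ((1 - t) *\<^sub>R x + t *\<^sub>R y, w)) \<le> f ((1 - t) *\<^sub>R (x, u) + t *\<^sub>R (y, v))"
      by (rule INF_lower2[of "(1 - t) *\<^sub>R u + t *\<^sub>R v"]) simp_all
    also have "\<dots> \<le> ereal ((1 - t) * (a + e) + t * (b + e))"
      by (rule convex_erealD[OF f u v t])
    finally show "(INF w. f ((1 - t) *\<^sub>R x + t *\<^sub>R y, w)) \<le> ereal ((1 - t) * a + t * b) + ereal e"
      by (simp add: algebra_simps)
  qed
qed

subsection \<open>Differentiability of the Moreau envelope\<close>

definition moreau_env :: "real^'n^'n \<Rightarrow> (real^'n \<Rightarrow> ereal) \<Rightarrow> real^'n \<Rightarrow> ereal" where
  "moreau_env A H m = (INF y. ereal (quad_form A (y - m) / 2) + H y)"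

lemma has_derivative_of_quadratic_error:
  fixes f :: "'a::real_normed_vector \<Rightarrow> real"
  assumes "bounded_linear L" "K \<ge> 0"
    and bound: "\<And>y. \<bar>f y - f x - L (y - x)\<bar> \<le> K * (norm (y - x))\<^sup>2"
  shows "(f has_derivative L) (at x)"
  unfolding has_derivative_at'
proof (intro conjI assms(1) allI impI)
  fix e :: real
  assume e: "e > 0"
  show "\<exists>d>0. \<forall>y. 0 < norm (y - x) \<and> norm (y - x) < d \<longrightarrow>
        norm (f y - f x - L (y - x)) / norm (y - x) < e"
  proof (intro exI[of _ "e / (K + 1)"] conjI allI impI)
    show "e / (K + 1) > 0"
      using e assms(2) by simp
    fix y
    assume y: "0 < norm (y - x) \<and> norm (y - x) < e / (K + 1)"
    have "norm (f y - f x - L (y - x)) / norm (y - x) \<le> K * norm (y - x)"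
      using bound[of y] y by (simp add: divide_le_eq power2_eq_square mult.assoc)
    also have "\<dots> \<le> (K + 1) * norm (y - x)"
      by (simp add: distrib_right)
    also have "\<dots> < e"
      using y assms(2) by (simp add: field_simps)
    finally show "norm (f y - f x - L (y - x)) / norm (y - x) < e" .
  qed
qed

text \<open>Compare \<open>z\<^sub>0\<close> with the points \<open>(1 - t)z\<^sub>0 + tz\<close> of the segment towards \<open>z\<close>.\<close>
lemma moreau_env_minimiser_directional_bound:
  assumes sym: "transpose A = A" and H: "convex_ereal H"
    and h0: "H z0 = ereal h0" and hz: "H z = ereal hz" and t: "0 < t" "t \<le> 1"
    and min: "\<And>y. ereal (quad_form A (z0 - m0) / 2) + H z0 \<le> ereal (quad_form A (y - m0) / 2) + H y"
  shows "(A *v (m0 - z0)) \<bullet> (z - z0) \<le> hz - h0 + t * (quad_form A (z - z0) / 2)"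
proof -
  let ?Q = "quad_form A"
  define e zt where "e = z - z0" and "zt = (1 - t) *\<^sub>R z0 + t *\<^sub>R z"
  have "H zt \<le> ereal ((1 - t) * h0 + t * hz)"
    unfolding zt_def using convex_erealD[OF H, of z0 h0 z hz t] h0 hz t by simp
  moreover have "H zt \<noteq> -\<infinity>"
    using min[of zt] h0 by auto
  ultimately obtain hzt where hzt: "H zt = ereal hzt" "hzt \<le> (1 - t) * h0 + t * hz"
    by (cases "H zt") auto
  have "zt - m0 = (z0 - m0) + t *\<^sub>R e"
    unfolding zt_def e_def by (simp add: algebra_simps)
  then have "?Q (zt - m0) = ?Q (z0 - m0) + 2 * t * ((z0 - m0) \<bullet> (A *v e)) + t\<^sup>2 * ?Q e"
    by (simp only: quad_form_add[OF sym] quad_form_scaleR matrix_vector_mult_scaleR inner_scaleR_right)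
  moreover have "?Q (z0 - m0) / 2 + h0 \<le> ?Q (zt - m0) / 2 + hzt"
    using min[of zt] h0 hzt(1) by simp
  ultimately have "t * (- ((z0 - m0) \<bullet> (A *v e))) \<le> t * (hz - h0 + t * (?Q e / 2))"
    using hzt(2) by (simp add: power2_eq_square algebra_simps)
  then have "- ((z0 - m0) \<bullet> (A *v e)) \<le> hz - h0 + t * (?Q e / 2)"
    using t(1) by (simp only: mult_le_cancel_left_pos)
  then show ?thesis
    using symmetric_matrix_inner_diff_commute[OF sym, of m0 z0 e] by (simp add: e_def)
qed

lemma moreau_env_minimiser_subgradient:
  assumes sym: "transpose A = A" and psd: "\<And>x. 0 \<le> quad_form A x"
    and H: "convex_ereal H" and h0: "H z0 = ereal h0"
    and min: "\<And>y. ereal (quad_form A (z0 - m0) / 2) + H z0 \<le> ereal (quad_form A (y - m0) / 2) + H y"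
  shows "ereal (h0 + (A *v (m0 - z0)) \<bullet> (z - z0)) \<le> H z"
proof (cases "H z")
  case (real hz)
  let ?q = "quad_form A (z - z0) / 2"
  have "(A *v (m0 - z0)) \<bullet> (z - z0) \<le> hz - h0"
  proof (rule field_le_epsilon)
    fix \<epsilon> :: real
    assume "0 < \<epsilon>"
    define t where "t = min 1 (\<epsilon> / (?q + 1))"
    have q: "0 \<le> ?q"
      using psd[of "z - z0"] by simp
    have t: "0 < t" "t \<le> 1"
      using \<open>0 < \<epsilon>\<close> q by (auto simp: t_def)
    have "t * ?q \<le> \<epsilon> / (?q + 1) * (?q + 1)"
      using q \<open>0 < \<epsilon>\<close> by (intro mult_mono) (auto simp: t_def)
    then have "t * ?q \<le> \<epsilon>"
      using q by simp
    then show "(A *v (m0 - z0)) \<bullet> (z - z0) \<le> hz - h0 + \<epsilon>"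
      using moreau_env_minimiser_directional_bound[OF sym H h0 real t min] by linarith
  qed
  then show ?thesis
    using real by simp
next
  case MInf
  then show ?thesis
    using min[of z] h0 by simp
qed simp

lemma moreau_env_upper_bound:
  assumes sym: "transpose A = A" and h0: "H z0 = ereal h0"
  shows "moreau_env A H m \<le> ereal (quad_form A (z0 - m0) / 2 + h0
    + (A *v (m0 - z0)) \<bullet> (m - m0) + quad_form A (m - m0) / 2)"
proof -
  let ?Q = "quad_form A"
  have le: "moreau_env A H m \<le> ereal (?Q (z0 - m) / 2) + H z0"
    unfolding moreau_env_def by (rule INF_lower) simp
  have "z0 - m = (z0 - m0) - (m - m0)"
    by simp
  then have "?Q (z0 - m) = ?Q (z0 - m0) - 2 * ((z0 - m0) \<bullet> (A *v (m - m0))) + ?Q (m - m0)"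
    by (simp only: quad_form_diff[OF sym])
  then have "?Q (z0 - m) / 2 + h0
      = ?Q (z0 - m0) / 2 + h0 + (A *v (m0 - z0)) \<bullet> (m - m0) + ?Q (m - m0) / 2"
    using symmetric_matrix_inner_diff_commute[OF sym, of m0 z0 "m - m0"]
      symmetric_matrix_inner_commute[OF sym, of "z0 - m0" "m - m0"]
    by linarith
  then show ?thesis
    using le h0 by (metis plus_ereal.simps(1))
qed

lemma moreau_env_lower_bound:
  assumes sym: "transpose A = A" and psd: "\<And>x. 0 \<le> quad_form A x"
    and H: "convex_ereal H" and h0: "H z0 = ereal h0"
    and min: "\<And>y. ereal (quad_form A (z0 - m0) / 2) + H z0 \<le> ereal (quad_form A (y - m0) / 2) + H y"
  shows "ereal (quad_form A (z0 - m0) / 2 + h0 + (A *v (m0 - z0)) \<bullet> (m - m0)) \<le> moreau_env A H m"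
  unfolding moreau_env_def
proof (rule INF_greatest)
  fix y
  let ?Q = "quad_form A" and ?g = "A *v (m0 - z0)"
  define r w where "r = y - m" and "w = z0 - m0"
  have "0 \<le> ?Q (r - w)"
    by (rule psd)
  then have "0 \<le> ?Q r - 2 * (r \<bullet> (A *v w)) + ?Q w"
    by (simp add: quad_form_diff[OF sym])
  moreover have "y - z0 = (r - w) + (m - m0)"
    by (simp add: r_def w_def)
  then have "?g \<bullet> (y - z0) = ?g \<bullet> (r - w) + ?g \<bullet> (m - m0)"
    by (metis inner_add_right)
  moreover have "?g \<bullet> (r - w) = - (w \<bullet> (A *v (r - w)))"
    unfolding w_def by (rule symmetric_matrix_inner_diff_commute[OF sym])
  moreover have "w \<bullet> (A *v (r - w)) = r \<bullet> (A *v w) - ?Q w"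
    using symmetric_matrix_inner_commute[OF sym, of w r]
    by (simp add: matrix_vector_mult_diff_distrib inner_diff_right quad_form_def)
  ultimately have "?Q w / 2 + h0 + ?g \<bullet> (m - m0) \<le> ?Q r / 2 + (h0 + ?g \<bullet> (y - z0))"
    by simp
  then have "ereal (?Q w / 2 + h0 + ?g \<bullet> (m - m0)) \<le> ereal (?Q r / 2) + ereal (h0 + ?g \<bullet> (y - z0))"
    by simp
  also have "\<dots> \<le> ereal (?Q r / 2) + H y"
    by (intro add_left_mono moreau_env_minimiser_subgradient[OF sym psd H h0 min])
  finally show "ereal (?Q (z0 - m0) / 2 + h0 + ?g \<bullet> (m - m0)) \<le> ereal (?Q (y - m) / 2) + H y"
    by (simp add: r_def w_def)
qed

lemma moreau_env_has_derivative:
  assumes sym: "transpose A = A" and psd: "\<And>x. 0 \<le> quad_form A x"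
    and H: "convex_ereal H" and finite: "\<bar>moreau_env A H m0\<bar> \<noteq> \<infinity>"
    and min: "\<And>y. ereal (quad_form A (z0 - m0) / 2) + H z0 \<le> ereal (quad_form A (y - m0) / 2) + H y"
  shows "((\<lambda>m. real_of_ereal (moreau_env A H m)) has_derivative (\<lambda>d. (A *v (m0 - z0)) \<bullet> d)) (at m0)"
proof -
  let ?Q = "quad_form A" and ?V = "\<lambda>m. real_of_ereal (moreau_env A H m)" and ?g = "A *v (m0 - z0)"
  have "moreau_env A H m0 \<le> ereal (?Q (z0 - m0) / 2) + H z0"
    unfolding moreau_env_def by (rule INF_lower) simp
  moreover have "moreau_env A H m0 < \<infinity>"
    using finite by (cases "moreau_env A H m0") auto
  then obtain y where "ereal (?Q (y - m0) / 2) + H y < \<infinity>"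
    unfolding moreau_env_def INF_less_iff by blast
  ultimately obtain h0 where h0: "H z0 = ereal h0"
    using finite min[of y] by (cases "H z0") auto
  define v0 where "v0 = ?Q (z0 - m0) / 2 + h0"
  have V: "v0 + ?g \<bullet> (m - m0) \<le> ?V m" "?V m \<le> v0 + ?g \<bullet> (m - m0) + ?Q (m - m0) / 2" for m
    using moreau_env_lower_bound[OF sym psd H h0 min, of m]
      moreau_env_upper_bound[where m = m and ?m0.0 = m0 and H = H and ?z0.0 = z0, OF sym h0]
    unfolding v0_def by (cases "moreau_env A H m"; simp)+
  have V0: "?V m0 = v0"
    using V[of m0] by (simp add: quad_form_def)
  obtain K where K: "K \<ge> 0" "\<And>x. ?Q x \<le> K * (norm x)\<^sup>2"
    using quad_form_le_norm_square by blast
  show ?thesis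
  proof (rule has_derivative_of_quadratic_error[OF bounded_linear_inner_right K(1)])
    fix m
    have "0 \<le> ?V m - ?V m0 - ?g \<bullet> (m - m0)" "?V m - ?V m0 - ?g \<bullet> (m - m0) \<le> ?Q (m - m0) / 2"
      using V[of m] V0 by simp_all
    then show "\<bar>?V m - ?V m0 - ?g \<bullet> (m - m0)\<bar> \<le> K * (norm (m - m0))\<^sup>2"
      using K(2)[of "m - m0"] psd[of "m - m0"] by linarith
  qed
qed

subsection \<open>The selection problem\<close>

definition selection_penalty ::
  "real^'d^'p \<Rightarrow> real^'p^'p \<Rightarrow> real^'p \<Rightarrow> (real^'p) measure \<Rightarrow> (real^'p) set
   \<Rightarrow> (real^'p \<Rightarrow> real) \<Rightarrow> real^'d \<Rightarrow> ereal" where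
  "selection_penalty D P q G R b z = (INF u. conj_fun (log_mgf G) (D *v z + P *v u + q) + barrier_ext R b u)"

lemma conj_fun_log_mgf_nonneg:
  assumes "prob_space G"
  shows "0 \<le> conj_fun (log_mgf G) w"
proof -
  have "log_mgf G 0 = 0"
    using prob_space.emeasure_space_1[OF assms] by (simp add: log_mgf_def zero_ereal_def)
  moreover have "ereal (0 \<bullet> w) - log_mgf G 0 \<le> conj_fun (log_mgf G) w"
    unfolding conj_fun_def by (rule SUP_upper) simp
  ultimately show ?thesis
    by (simp add: zero_ereal_def)
qed

lemma convex_ereal_selection_penalty:
  assumes "prob_space G" "barrier R b"
  shows "convex_ereal (selection_penalty D P q G R b)"
proof -
  let ?L = "\<lambda>(z, u). D *v z + P *v u"
  have "linear ?L"
    by (rule linearI) (auto simp: algebra_simps)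
  then have "convex_ereal (\<lambda>zu. conj_fun (log_mgf G) (?L zu + q))"
    by (rule convex_ereal_compose_affine[OF convex_ereal_conj_fun])
  moreover have "convex_ereal (\<lambda>zu. barrier_ext R b (snd zu + 0))"
    using assms(2) unfolding barrier_def
    by (intro convex_ereal_compose_affine convex_ereal_barrier_ext linear_snd) auto
  ultimately have "convex_ereal (\<lambda>zu. conj_fun (log_mgf G) (?L zu + q) + barrier_ext R b (snd zu + 0))"
    using conj_fun_log_mgf_nonneg[OF assms(1)]
    by (intro convex_ereal_add) (auto simp: barrier_ext_def intro: not_MInfty_nonneg)
  then have "convex_ereal (\<lambda>(z, u). conj_fun (log_mgf G) (D *v z + P *v u + q) + barrier_ext R b u)"
    by (simp add: split_def)
  then show ?thesis
    unfolding selection_penalty_def[abs_def] using convex_ereal_INF by fastforce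
qed

lemma INF_ereal_add_real: "(INF u. ereal a + f u) = ereal a + (INF u. f u)"
proof (rule antisym)
  have le: "ereal c + (INF u. g u) \<le> (INF u. ereal c + g u)" for c and g :: "'a \<Rightarrow> ereal"
    by (intro INF_greatest add_left_mono INF_lower) auto
  have "ereal (-a) + (INF u. ereal a + f u) \<le> (INF u. f u)"
    using le[of "-a" "\<lambda>u. ereal a + f u"] by (simp add: add.assoc[symmetric])
  then have "ereal a + (ereal (-a) + (INF u. ereal a + f u)) \<le> ereal a + (INF u. f u)"
    by (rule add_left_mono)
  then show "(INF u. ereal a + f u) \<le> ereal a + (INF u. f u)"
    by (simp add: add.assoc[symmetric])
qed (intro INF_greatest add_left_mono INF_lower; simp)

lemma log_Phat_eq_moreau_env:
  "log_Phat mu Sig D P q G R b beta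
     = - moreau_env (matrix_inv Sig) (selection_penalty D P q G R b) (mu beta)"
  unfolding log_Phat_def moreau_env_def selection_penalty_def quad_form_def
  by (simp add: add.assoc INF_ereal_add_real)

lemma sstar_obj_complete_square:
  assumes "transpose (matrix_inv Sig) = matrix_inv Sig"
  shows "sstar_obj Sig D P q G R b (matrix_inv Sig *v m) z
    = ereal (quad_form (matrix_inv Sig) m / 2)
      - (ereal (quad_form (matrix_inv Sig) (z - m) / 2) + selection_penalty D P q G R b z)"
proof -
  have "z \<bullet> (matrix_inv Sig *v m) - quad_form (matrix_inv Sig) z / 2
      = quad_form (matrix_inv Sig) m / 2 - quad_form (matrix_inv Sig) (z - m) / 2"
    unfolding quad_form_diff[OF assms] by (simp add: field_simps)
  then show ?thesis
    unfolding sstar_obj_def selection_penalty_def quad_form_def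
    by (cases "INF u. conj_fun (log_mgf G) (D *v z + P *v u + q) + barrier_ext R b u")
       (simp_all add: quad_form_def)
qed

lemma is_arg_max_ereal_minus:
  assumes "is_arg_max (\<lambda>z. ereal c - f z) (\<lambda>_. True) z0"
  shows "f z0 \<le> f y"
proof (rule ccontr)
  assume "\<not> f z0 \<le> f y"
  then have "ereal c - f z0 < ereal c - f y"
    by (cases "f z0"; cases "f y") auto
  then show False
    using assms by (auto simp: is_arg_max_def)
qed

lemma has_derivative_grad:
  fixes f :: "real^'k \<Rightarrow> real"
  assumes "f differentiable (at x)"
  shows "(f has_derivative (\<lambda>h. grad f x \<bullet> h)) (at x)"
proof -
  let ?f' = "frechet_derivative f (at x)"
  have lin: "linear ?f'"
    using assms by (rule linear_frechet_derivative)
  have "?f' h = grad f x \<bullet> h" for h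
  proof -
    have "?f' h = ?f' (\<Sum>i\<in>UNIV. h $ i *s axis i 1)"
      by (simp add: basis_expansion)
    also have "\<dots> = (\<Sum>i\<in>UNIV. h $ i * ?f' (axis i 1))"
      using lin by (simp add: linear_sum linear_scale scalar_mult_eq_scaleR)
    also have "\<dots> = grad f x \<bullet> h"
      by (simp add: grad_def inner_vec_def mult.commute)
    finally show ?thesis .
  qed
  then have "?f' = (\<lambda>h. grad f x \<bullet> h)"
    by (simp add: fun_eq_iff)
  then show ?thesis
    using frechet_derivative_works[THEN iffD1, OF assms] by simp
qed

lemma has_derivative_sub_half_quad_form:
  assumes sym: "transpose A = A" and V: "(V has_derivative (\<lambda>d. (A *v (m0 - z0)) \<bullet> d)) (at m0)"
  shows "((\<lambda>m. V m - quad_form A (s - m) / 2) has_derivative (\<lambda>d. (A *v (s - z0)) \<bullet> d)) (at m0)"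
proof -
  have "((\<lambda>m. s - m) has_derivative uminus) (at m0)"
    by (auto intro!: derivative_eq_intros)
  from has_derivative_compose[OF this has_derivative_quad_form[OF sym]]
  have "((\<lambda>m. quad_form A (s - m) / 2) has_derivative (\<lambda>d. - ((A *v (s - m0)) \<bullet> d))) (at m0)"
    by (auto intro!: derivative_eq_intros)
  from has_derivative_diff[OF V this]
  show ?thesis
    by (simp add: matrix_vector_mult_diff_distrib inner_diff_left)
qed

lemma has_derivative_log_posterior:
  fixes mu :: "real^'k \<Rightarrow> real^'d" and prior :: "real^'k \<Rightarrow> real"
  assumes "mu differentiable (at beta0)" "prior differentiable (at beta0)" "0 < prior beta0"
    and "(\<phi> has_derivative (\<lambda>d. g \<bullet> d)) (at (mu beta0))"
  shows "((\<lambda>beta. C + ln (prior beta) + \<phi> (mu beta)) has_derivative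
    (\<lambda>h. (grad (\<lambda>beta. ln (prior beta)) beta0 + transpose (jacobian mu (at beta0)) *v g) \<bullet> h)) (at beta0)"
proof -
  have "((\<lambda>beta. ln (prior beta)) has_derivative
      (\<lambda>h. grad (\<lambda>beta. ln (prior beta)) beta0 \<bullet> h)) (at beta0)"
    using assms(2,3)
    by (intro has_derivative_grad) (auto simp: differentiable_def intro: has_derivative_ln)
  moreover have "((\<lambda>beta. \<phi> (mu beta)) has_derivative
      (\<lambda>h. (transpose (jacobian mu (at beta0)) *v g) \<bullet> h)) (at beta0)"
    using has_derivative_compose[OF jacobian_works[THEN iffD1, OF assms(1)] assms(4)]
    by (simp add: dot_lmul_matrix)
  ultimately show ?thesis
    using has_derivative_add[OF has_derivative_add[OF has_derivative_const]] by (simp add: inner_add_left)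
qed

lemma ln_pseudo_posterior_eq:
  fixes Sig :: "real^'d^'d"
  assumes "c > 0" "det Sig \<noteq> 0"
  obtains C where "\<And>beta. 0 < prior beta \<Longrightarrow>
    ln (c * prior beta * gauss_dens Sig (mu beta) s / exp (real_of_ereal (log_Phat mu Sig D P q G R b beta)))
    = C + ln (prior beta)
      + (real_of_ereal (moreau_env (matrix_inv Sig) (selection_penalty D P q G R b) (mu beta))
         - quad_form (matrix_inv Sig) (s - mu beta) / 2)"
proof -
  have "ln (c * prior beta * gauss_dens Sig (mu beta) s / exp (real_of_ereal (log_Phat mu Sig D P q G R b beta)))
    = ln (c * ((2 * pi) powr (- real CARD('d) / 2) * det Sig powr (-1/2))) + ln (prior beta)
      + (real_of_ereal (moreau_env (matrix_inv Sig) (selection_penalty D P q G R b) (mu beta))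
         - quad_form (matrix_inv Sig) (s - mu beta) / 2)" if "0 < prior beta" for beta
    using assms that unfolding gauss_dens_def quad_form_def log_Phat_eq_moreau_env
    by (simp add: ln_mult ln_div)
  then show ?thesis
    by (rule that)
qed

lemma s_star_minimises_moreau_integrand:
  fixes Sig :: "real^'d^'d"
  assumes "pos_def_mat Sig"
    and "\<exists>z. is_arg_max (sstar_obj Sig D P q G R b (matrix_inv Sig *v m)) (\<lambda>_. True) z"
  shows "ereal (quad_form (matrix_inv Sig) (s_star Sig D P q G R b (matrix_inv Sig *v m) - m) / 2)
      + selection_penalty D P q G R b (s_star Sig D P q G R b (matrix_inv Sig *v m))
    \<le> ereal (quad_form (matrix_inv Sig) (y - m) / 2) + selection_penalty D P q G R b y"
proof -
  have sym: "transpose (matrix_inv Sig) = matrix_inv Sig"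
    using pos_def_mat_matrix_inv[OF assms(1)] by (simp add: pos_def_mat_def)
  have "is_arg_max (sstar_obj Sig D P q G R b (matrix_inv Sig *v m)) (\<lambda>_. True)
      (s_star Sig D P q G R b (matrix_inv Sig *v m))"
    using someI_ex[OF assms(2)] by (simp add: s_star_def arg_max_def)
  then show ?thesis
    unfolding sstar_obj_complete_square[OF sym] by (rule is_arg_max_ereal_minus)
qed

theorem theorem4:
  fixes mu :: "real^'k \<Rightarrow> real^'d"
    and Sig :: "real^'d^'d"
    and prior :: "real^'k \<Rightarrow> real"
    and D :: "real^'d^'p" and P :: "real^'p^'p" and q :: "real^'p"
    and G :: "(real^'p) measure"
    and R :: "(real^'p) set" and b :: "real^'p \<Rightarrow> real"
    and s :: "real^'d" and beta0 :: "real^'k" and c :: real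
  assumes Sig_pd: "pos_def_mat Sig"
    and mu_diff: "\<And>beta. mu differentiable (at beta)"
    and prior_nonneg: "\<And>beta. prior beta \<ge> 0"
    and prior_int: "(prior has_integral 1) UNIV"
    and prior_diff: "\<And>beta. prior differentiable (at beta)"
    and prior_pos: "prior beta0 > 0"
    and G_prob: "prob_space G" and G_sets: "sets G = sets borel"
    and b_barrier: "barrier R b"
    and c_pos: "c > 0"
    and Phat_fin: "\<bar>log_Phat mu Sig D P q G R b beta0\<bar> \<noteq> \<infinity>"
    and argmax_ex: "\<exists>z. is_arg_max (sstar_obj Sig D P q G R b (matrix_inv Sig *v mu beta0))
                           (\<lambda>_. True) z"
  shows "((\<lambda>beta. ln (c * prior beta * gauss_dens Sig (mu beta) s
                      / exp (real_of_ereal (log_Phat mu Sig D P q G R b beta))))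
          has_derivative
          (\<lambda>h. (grad (\<lambda>beta. ln (prior beta)) beta0
                 + transpose (jacobian mu (at beta0)) *v
                   (matrix_inv Sig *v
                     (s - s_star Sig D P q G R b (matrix_inv Sig *v mu beta0)))) \<bullet> h))
         (at beta0)"
proof -
  define A H m0 z0 where "A = matrix_inv Sig" and "H = selection_penalty D P q G R b"
    and "m0 = mu beta0" and "z0 = s_star Sig D P q G R b (matrix_inv Sig *v mu beta0)"
  have "pos_def_mat A"
    unfolding A_def by (rule pos_def_mat_matrix_inv[OF Sig_pd])
  then have sym: "transpose A = A" and psd: "\<And>x. 0 \<le> quad_form A x"
    by (auto simp: pos_def_mat_def intro: pos_def_mat_quad_form_nonneg)
  have V: "((\<lambda>m. real_of_ereal (moreau_env A H m)) has_derivative (\<lambda>d. (A *v (m0 - z0)) \<bullet> d)) (at m0)"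
  proof (rule moreau_env_has_derivative[OF sym psd])
    show "convex_ereal H"
      unfolding H_def by (rule convex_ereal_selection_penalty[OF G_prob b_barrier])
    show "\<bar>moreau_env A H m0\<bar> \<noteq> \<infinity>"
      using Phat_fin by (simp add: H_def A_def m0_def log_Phat_eq_moreau_env)
    show "ereal (quad_form A (z0 - m0) / 2) + H z0 \<le> ereal (quad_form A (y - m0) / 2) + H y" for y
      unfolding A_def H_def m0_def z0_def by (rule s_star_minimises_moreau_integrand[OF Sig_pd argmax_ex])
  qed
  obtain C where eq: "\<And>beta. 0 < prior beta \<Longrightarrow> ln (c * prior beta * gauss_dens Sig (mu beta) s
      / exp (real_of_ereal (log_Phat mu Sig D P q G R b beta)))
    = C + ln (prior beta) + (real_of_ereal (moreau_env A H (mu beta)) - quad_form A (s - mu beta) / 2)"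
    using ln_pseudo_posterior_eq[OF c_pos invertible_det_nz[THEN iffD1, OF pos_def_mat_invertible[OF Sig_pd]]]
    unfolding A_def H_def by blast
  from has_derivative_log_posterior[where C = C, OF mu_diff prior_diff prior_pos
      has_derivative_sub_half_quad_form[OF sym V, unfolded m0_def]]
  show ?thesis
    unfolding A_def z0_def
  proof (rule has_derivative_transform_within_open)
    show "open {beta. 0 < prior beta}"
      using prior_diff
      by (simp add: open_Collect_less differentiable_imp_continuous_on differentiable_at_imp_differentiable_on)
  qed (use prior_pos eq in \<open>simp_all add: A_def\<close>)
qed

end
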